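(* The group $\operatorname{Homeo}_c(\mathbb{R})$ of compactly supported homeomorphisms of $\mathbb{R}$ is not mitotic.
   Context: A subgroup $H \leq \Gamma$ has a mitosis in $\Gamma$ if there are elements $s,d \in \Gamma$ such that $h\cdot s^{-1}hs = d^{-1}hd$ for all $h \in H$ and $[h, s^{-1}h's] = 1$ for all $h,h' \in H$. A group $\Gamma$ is mitotic if every finitely generated subgroup of $\Gamma$ has a mitosis in $\Gamma$. *)

theory Defs
  imports "HOL-Analysis.Analysis" "HOL-Algebra.Generated_Groups"
begin

definition commutator :: "('a, 'b) monoid_scheme \<Rightarrow> 'a \<Rightarrow> 'a \<Rightarrow> 'a" where
  "commutator G a b = inv\<^bsub>G\<^esub> a \<otimes>\<^bsub>G\<^esub> inv\<^bsub>G\<^esub> b \<otimes>\<^bsub>G\<^esub> a \<otimes>\<^bsub>G\<^esub> b"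

definition has_mitosis :: "('a, 'b) monoid_scheme \<Rightarrow> 'a set \<Rightarrow> bool" where
  "has_mitosis G H \<longleftrightarrow> (\<exists>s\<in>carrier G. \<exists>d\<in>carrier G.
     (\<forall>h\<in>H. h \<otimes>\<^bsub>G\<^esub> (inv\<^bsub>G\<^esub> s \<otimes>\<^bsub>G\<^esub> h \<otimes>\<^bsub>G\<^esub> s)
              = inv\<^bsub>G\<^esub> d \<otimes>\<^bsub>G\<^esub> h \<otimes>\<^bsub>G\<^esub> d) \<and>
     (\<forall>h\<in>H. \<forall>h'\<in>H.
        commutator G h (inv\<^bsub>G\<^esub> s \<otimes>\<^bsub>G\<^esub> h' \<otimes>\<^bsub>G\<^esub> s) = \<one>\<^bsub>G\<^esub>))"

definition mitotic :: "('a, 'b) monoid_scheme \<Rightarrow> bool" where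
  "mitotic G \<longleftrightarrow> (\<forall>H. subgroup H G \<and>
      (\<exists>S. finite S \<and> S \<subseteq> carrier G \<and> H = generate G S) \<longrightarrow> has_mitosis G H)"

definition homeo_c :: "(real \<Rightarrow> real) set" where
  "homeo_c = {f. homeomorphism UNIV UNIV f (Hilbert_Choice.inv f) \<and> compact (closure {x. f x \<noteq> x})}"

definition Homeo_c_group :: "(real \<Rightarrow> real) monoid" where
  "Homeo_c_group = \<lparr>carrier = homeo_c, mult = (\<lambda>f g. f \<circ> g), one = id\<rparr>"

end

(* Let a and b be bumps supported on (0, 1) and (-1/2, 1/2) that move points to the right, and
   suppose (s, d) is a mitosis of the subgroup they generate. Then c = s^-1 a s is a bump supported
   on s^-1 (0, 1) that commutes with a and b. An increasing homeomorphism commuting with c maps the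
   support of c onto itself and so fixes its endpoints; hence neither of the supports of a and c
   contains an endpoint of the other. As a and c both move points to the right, the support of a c
   is the union of the two supports, and as a c = d^-1 a d it is an interval. So the supports
   coincide, and b, commuting with c, must fix 0, which it does not. *)

theory Submission
  imports Defs
begin

definition moved :: "('a \<Rightarrow> 'a) \<Rightarrow> 'a set" where
  "moved f = {x. f x \<noteq> x}"

lemma in_moved_iff [simp]: "x \<in> moved f \<longleftrightarrow> f x \<noteq> x"
  by (simp add: moved_def)

lemma moved_conjugate:
  assumes "inj s" "s \<circ> c = a \<circ> s"
  shows "moved c = s -` moved a"
proof -
  have "c x \<noteq> x \<longleftrightarrow> a (s x) \<noteq> s x" for x
    using inj_eq[OF assms(1), of "c x" x] fun_cong[OF assms(2), of x] by simp
  then show ?thesis by auto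
qed

lemma moved_comp_of_ge:
  fixes f g :: "'a::order \<Rightarrow> 'a"
  assumes "\<And>x. x \<le> f x" "\<And>x. x \<le> g x"
  shows "moved (f \<circ> g) = moved f \<union> moved g"
  unfolding moved_def by (auto; metis assms order.antisym order.trans)

lemma strict_mono_vimage_greaterThanLessThan:
  fixes f :: "'a::linorder \<Rightarrow> 'b::linorder"
  assumes "strict_mono f"
  shows "f -` {f p<..<f q} = {p<..<q}"
  by (auto simp: strict_mono_less[OF assms])

lemma strict_mono_surj_vimage_greaterThanLessThan:
  fixes f :: "'a::linorder \<Rightarrow> 'b::linorder"
  assumes "strict_mono f" "surj f"
  obtains p' q' where "f -` {p<..<q} = {p'<..<q'}" "f p' = p" "f q' = q"
  by (metis assms surjD strict_mono_vimage_greaterThanLessThan)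

lemma commuting_fixes_endpoints:
  fixes f g :: "real \<Rightarrow> real"
  assumes "strict_mono f" "surj f" "f \<circ> g = g \<circ> f" "moved g = {p<..<q}" "p < q"
  shows "f p = p \<and> f q = q"
proof -
  obtain p' q' where pq': "f -` {p<..<q} = {p'<..<q'}" "f p' = p" "f q' = q"
    using assms(1,2) by (rule strict_mono_surj_vimage_greaterThanLessThan)
  have "{p'<..<q'} = {p<..<q}"
    using moved_conjugate[OF strict_mono_imp_inj_on[OF assms(1)] assms(3)] assms(4) pq'(1) by simp
  then have "p' = p \<and> q' = q"
    using \<open>p < q\<close> by (simp add: greaterThanLessThan_eq_iff)
  with pq' show ?thesis by simp
qed

lemma is_interval_Un_greaterThanLessThan_imp_eq:
  fixes a b p q :: real
  assumes "is_interval ({a<..<b} \<union> {p<..<q})" "a < b" "p < q"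
    and "a \<notin> {p<..<q}" "b \<notin> {p<..<q}" "p \<notin> {a<..<b}" "q \<notin> {a<..<b}"
  shows "p = a \<and> q = b"
proof -
  let ?I = "{a<..<b} \<union> {p<..<q}"
  have between: "y \<in> ?I" if "x \<in> ?I" "z \<in> ?I" "x \<le> y" "y \<le> z" for x y z
    using assms(1) that unfolding is_interval_1 by blast
  have mids: "(a + b) / 2 \<in> ?I" "(p + q) / 2 \<in> ?I" using assms(2,3) by auto
  consider "p < a" | "a < p" | "p = a" by linarith
  then show ?thesis
  proof cases
    case 1
    then have "(p + q) / 2 \<le> a" using assms(3,4) by auto
    with assms(2) have "a \<in> ?I" by (intro between[OF mids(2) mids(1)]) auto
    then show ?thesis using assms(4) by simp
  next
    case 2
    then have "b \<le> (p + q) / 2" using assms(3,6) by auto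
    with assms(2) have "b \<in> ?I" by (intro between[OF mids(1) mids(2)]) auto
    then show ?thesis using assms(5) by simp
  next
    case 3
    then show ?thesis using assms(2,3,5,7) by auto
  qed
qed

lemma homeo_c_iff: "f \<in> homeo_c \<longleftrightarrow> (\<exists>g. homeomorphism UNIV UNIV f g) \<and> bounded (moved f)"
proof -
  have "Hilbert_Choice.inv f = g" if "homeomorphism UNIV UNIV f g" for g
    using that unfolding homeomorphism_def by (intro inv_equality) auto
  then show ?thesis
    unfolding homeo_c_def moved_def compact_closure by auto
qed

lemma homeo_c_bij: "f \<in> homeo_c \<Longrightarrow> bij f"
  unfolding homeo_c_def homeomorphism_def
  by (auto intro!: bij_betw_byWitness[where f' = "Hilbert_Choice.inv f"])

lemma homeo_c_surj: "f \<in> homeo_c \<Longrightarrow> surj f"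
  using homeo_c_bij bij_is_surj by blast

lemma homeo_c_id: "id \<in> homeo_c"
  unfolding homeo_c_iff moved_def id_def using homeomorphism_ident by auto

lemma homeo_c_comp:
  assumes "f \<in> homeo_c" "g \<in> homeo_c"
  shows "f \<circ> g \<in> homeo_c"
proof -
  obtain f' g' where "homeomorphism UNIV UNIV f f'" "homeomorphism UNIV UNIV g g'"
    using assms unfolding homeo_c_iff by blast
  then have "homeomorphism UNIV UNIV (f \<circ> g) (g' \<circ> f')"
    by (rule homeomorphism_compose[rotated])
  moreover have "moved (f \<circ> g) \<subseteq> moved f \<union> moved g"
    unfolding moved_def by auto
  then have "bounded (moved (f \<circ> g))"
    using assms unfolding homeo_c_iff by (metis bounded_Un bounded_subset)
  ultimately show ?thesis
    unfolding homeo_c_iff by blast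
qed

lemma homeo_c_inv:
  assumes "f \<in> homeo_c"
  shows "Hilbert_Choice.inv f \<in> homeo_c"
proof -
  have "homeomorphism UNIV UNIV (Hilbert_Choice.inv f) f"
    using assms homeomorphism_sym unfolding homeo_c_def by blast
  moreover have "moved (Hilbert_Choice.inv f) = moved f"
    using bij_inv_eq_iff[OF homeo_c_bij[OF assms]] unfolding moved_def by metis
  ultimately show ?thesis
    using assms unfolding homeo_c_iff by auto
qed

lemma homeo_c_strict_mono:
  assumes "f \<in> homeo_c"
  shows "strict_mono f"
proof -
  have "strict_mono_on UNIV f \<or> strict_antimono_on UNIV f"
    using injective_eq_monotone_map[of UNIV f] homeo_c_bij[OF assms] assms
    unfolding homeo_c_def homeomorphism_def by (simp add: bij_is_inj)
  moreover obtain B where "\<And>x. x \<in> moved f \<Longrightarrow> \<bar>x\<bar> \<le> B"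
    using assms unfolding homeo_c_iff bounded_real by blast
  then have fixed: "f (\<bar>B\<bar> + 1) = \<bar>B\<bar> + 1" "f (- \<bar>B\<bar> - 1) = - \<bar>B\<bar> - 1"
    unfolding moved_def by force+
  have "\<not> strict_antimono_on UNIV f"
  proof
    assume "strict_antimono_on UNIV f"
    then have "f (\<bar>B\<bar> + 1) < f (- \<bar>B\<bar> - 1)"
      by (simp add: monotone_on_def)
    with fixed show False by simp
  qed
  ultimately show ?thesis by blast
qed

lemma carrier_Homeo_c_group [simp]: "carrier Homeo_c_group = homeo_c"
  by (simp add: Homeo_c_group_def)

lemma mult_Homeo_c_group [simp]: "f \<otimes>\<^bsub>Homeo_c_group\<^esub> g = f \<circ> g"
  by (simp add: Homeo_c_group_def)

lemma one_Homeo_c_group [simp]: "\<one>\<^bsub>Homeo_c_group\<^esub> = id"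
  by (simp add: Homeo_c_group_def)

lemma group_Homeo_c_group: "group Homeo_c_group"
proof (rule groupI)
  fix f g h
  assume f: "f \<in> carrier Homeo_c_group" and "g \<in> carrier Homeo_c_group" "h \<in> carrier Homeo_c_group"
  then show "f \<otimes>\<^bsub>Homeo_c_group\<^esub> g \<in> carrier Homeo_c_group"
    by (simp add: homeo_c_comp)
  show "f \<otimes>\<^bsub>Homeo_c_group\<^esub> g \<otimes>\<^bsub>Homeo_c_group\<^esub> h
      = f \<otimes>\<^bsub>Homeo_c_group\<^esub> (g \<otimes>\<^bsub>Homeo_c_group\<^esub> h)"
    by (simp add: o_assoc)
  show "\<one>\<^bsub>Homeo_c_group\<^esub> \<otimes>\<^bsub>Homeo_c_group\<^esub> f = f"
    by simp
  have "Hilbert_Choice.inv f \<circ> f = id"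
    using f by (simp add: homeo_c_bij bij_is_inj)
  then show "\<exists>g\<in>carrier Homeo_c_group. g \<otimes>\<^bsub>Homeo_c_group\<^esub> f = \<one>\<^bsub>Homeo_c_group\<^esub>"
    using f homeo_c_inv by auto
qed (simp add: homeo_c_id)

lemma (in group) commutator_eq_one_iff:
  assumes "a \<in> carrier G" "b \<in> carrier G"
  shows "commutator G a b = \<one> \<longleftrightarrow> a \<otimes> b = b \<otimes> a"
proof -
  have "commutator G a b = inv (b \<otimes> a) \<otimes> (a \<otimes> b)"
    unfolding commutator_def using assms by (simp add: inv_mult_group m_assoc)
  then have "commutator G a b = \<one> \<longleftrightarrow> \<one> = inv (b \<otimes> a) \<otimes> (a \<otimes> b)"
    by (simp add: eq_commute)
  also have "\<dots> \<longleftrightarrow> a \<otimes> b = b \<otimes> a \<otimes> \<one>"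
    using assms by (intro inv_solve_left) simp_all
  finally show ?thesis
    using assms by simp
qed

lemma (in group) has_mitosisE:
  assumes "has_mitosis G H" "H \<subseteq> carrier G" "a \<in> H"
  obtains s c d where "s \<in> carrier G" "c \<in> carrier G" "d \<in> carrier G"
    "s \<otimes> c = a \<otimes> s" "d \<otimes> (a \<otimes> c) = a \<otimes> d" "\<And>h. h \<in> H \<Longrightarrow> h \<otimes> c = c \<otimes> h"
proof -
  obtain s d where s: "s \<in> carrier G" and d: "d \<in> carrier G"
    and product: "a \<otimes> (inv s \<otimes> a \<otimes> s) = inv d \<otimes> a \<otimes> d"
    and commutes: "\<And>h. h \<in> H \<Longrightarrow> commutator G h (inv s \<otimes> a \<otimes> s) = \<one>"
    using assms(1,3) unfolding has_mitosis_def by blast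
  define c where "c = inv s \<otimes> a \<otimes> s"
  have a: "a \<in> carrier G" using assms(2,3) by blast
  have c: "c \<in> carrier G" using a s by (simp add: c_def)
  have "s \<otimes> c = s \<otimes> inv s \<otimes> a \<otimes> s"
    using a s by (simp only: c_def m_assoc inv_closed m_closed)
  also have "\<dots> = a \<otimes> s" using a s by simp
  finally have conj_c: "s \<otimes> c = a \<otimes> s" .
  have "d \<otimes> (a \<otimes> c) = d \<otimes> inv d \<otimes> a \<otimes> d"
    using a d by (simp only: c_def product m_assoc inv_closed m_closed)
  also have "\<dots> = a \<otimes> d" using a d by simp
  finally have conj_ac: "d \<otimes> (a \<otimes> c) = a \<otimes> d" .
  have "h \<otimes> c = c \<otimes> h" if "h \<in> H" for h
  proof -
    have "commutator G h c = \<one>" using commutes[OF that] by (simp only: c_def)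
    then show ?thesis using commutator_eq_one_iff[of h c] c that assms(2) by blast
  qed
  then show ?thesis using that s c d conj_c conj_ac by blast
qed

definition bump :: "real \<Rightarrow> real \<Rightarrow> real" where
  "bump t x = x + max 0 (min (x - t) (t + 1 - x)) / 2"

lemma moved_bump: "moved (bump t) = {t<..<t + 1}"
  unfolding moved_def bump_def by (auto simp: max_def min_def)

lemma le_bump: "x \<le> bump t x"
  unfolding bump_def by simp

lemma bump_in_homeo_c: "bump t \<in> homeo_c"
proof -
  define g where "g y = y - max 0 (min ((y - t) / 3) (t + 1 - y))" for y
  have inverse: "g (bump t x) = x" "bump t (g x) = x" for x
    unfolding g_def bump_def by (auto simp: max_def min_def field_simps)
  then have "surj (bump t)" "surj g"
    by (metis surjI)+
  moreover have "continuous_on UNIV (bump t)" "continuous_on UNIV g"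
    unfolding g_def bump_def by (intro continuous_intros; simp)+
  ultimately have "homeomorphism UNIV UNIV (bump t) g"
    unfolding homeomorphism_def using inverse by auto
  moreover have "bounded (moved (bump t))"
    by (simp add: moved_bump)
  ultimately show ?thesis
    unfolding homeo_c_iff by blast
qed

lemma moved_eq_of_mitotic_conjugate:
  fixes a c s d :: "real \<Rightarrow> real"
  assumes homeo: "a \<in> homeo_c" "c \<in> homeo_c" "s \<in> homeo_c" "d \<in> homeo_c"
    and a: "moved a = {u<..<v}" "u < v" "\<And>x. x \<le> a x"
    and conj_c: "s \<circ> c = a \<circ> s" and conj_ac: "d \<circ> (a \<circ> c) = a \<circ> d"
    and comm: "a \<circ> c = c \<circ> a"
  shows "moved c = moved a"
proof -
  have mono: "strict_mono f" "surj f" if "f \<in> homeo_c" for f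
    using that homeo_c_strict_mono homeo_c_surj by blast+
  obtain p q where "s -` {u<..<v} = {p<..<q}" "s p = u" "s q = v"
    using mono[OF homeo(3)] by (rule strict_mono_surj_vimage_greaterThanLessThan)
  moreover have "moved c = s -` moved a"
    using moved_conjugate[OF strict_mono_imp_inj_on conj_c] mono[OF homeo(3)] by blast
  ultimately have moved_c: "moved c = {p<..<q}" and "p < q"
    using a(1,2) mono[OF homeo(3)] by (auto simp: strict_mono_less)
  have a_fix: "a p = p \<and> a q = q"
    using commuting_fixes_endpoints[OF mono[OF homeo(1)] comm moved_c \<open>p < q\<close>] .
  have c_fix: "c u = u \<and> c v = v"
    using commuting_fixes_endpoints[OF mono[OF homeo(2)] comm[symmetric] a(1,2)] .
  have "x \<le> c x" for x
  proof -
    have "s x \<le> s (c x)" using a(3)[of "s x"] fun_cong[OF conj_c, of x] by simp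
    then show ?thesis using strict_mono_less_eq[OF mono(1)[OF homeo(3)]] by blast
  qed
  then have "moved (a \<circ> c) = {u<..<v} \<union> {p<..<q}"
    using moved_comp_of_ge a(1,3) moved_c by metis
  moreover obtain e f where "d -` {u<..<v} = {e<..<f}"
    using mono[OF homeo(4)] by (rule strict_mono_surj_vimage_greaterThanLessThan)
  moreover have "moved (a \<circ> c) = d -` moved a"
    using moved_conjugate[OF strict_mono_imp_inj_on conj_ac] mono[OF homeo(4)] by blast
  ultimately have "is_interval ({u<..<v} \<union> {p<..<q})"
    using a(1) is_interval_oo[of e f] by metis
  moreover have "u \<notin> {p<..<q}" "v \<notin> {p<..<q}"
    using c_fix unfolding moved_c[symmetric] by simp_all
  moreover have "p \<notin> {u<..<v}" "q \<notin> {u<..<v}"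
    using a_fix unfolding a(1)[symmetric] by simp_all
  ultimately have "p = u \<and> q = v"
    using is_interval_Un_greaterThanLessThan_imp_eq a(2) \<open>p < q\<close> by blast
  then show ?thesis
    using moved_c a(1) by simp
qed

theorem lemma3p18:
  shows "\<not> mitotic Homeo_c_group"
proof
  assume mitotic: "mitotic Homeo_c_group"
  define a b where "a = bump 0" and "b = bump (- 1 / 2)"
  define H where "H = generate Homeo_c_group {a, b}"
  have gens: "{a, b} \<subseteq> carrier Homeo_c_group"
    by (simp add: a_def b_def bump_in_homeo_c)
  have H: "subgroup H Homeo_c_group"
    unfolding H_def using group.generate_is_subgroup[OF group_Homeo_c_group gens] .
  moreover have "finite {a, b}"
    by simp
  ultimately have mitosis: "has_mitosis Homeo_c_group H"
    using mitotic gens unfolding mitotic_def H_def by blast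
  have "a \<in> H" "b \<in> H"
    unfolding H_def by (auto intro: generate.incl)
  obtain s c d where "s \<in> homeo_c" "c \<in> homeo_c" "d \<in> homeo_c"
    "s \<circ> c = a \<circ> s" "d \<circ> (a \<circ> c) = a \<circ> d" and commutes: "\<And>h. h \<in> H \<Longrightarrow> h \<circ> c = c \<circ> h"
    by (rule group.has_mitosisE[OF group_Homeo_c_group mitosis subgroup.subset[OF H] \<open>a \<in> H\<close>,
          unfolded carrier_Homeo_c_group mult_Homeo_c_group])
      (rule that; blast)
  moreover have "a \<in> homeo_c" "moved a = {0<..<1}" "\<And>x. x \<le> a x"
    by (simp_all add: a_def bump_in_homeo_c moved_bump le_bump)
  ultimately have "moved c = {0<..<1}"
    using moved_eq_of_mitotic_conjugate[of a c s d 0 1] commutes[OF \<open>a \<in> H\<close>] by simp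
  moreover have "b \<in> homeo_c"
    by (simp add: b_def bump_in_homeo_c)
  ultimately have "b 0 = 0"
    using commuting_fixes_endpoints[of b c 0 1] homeo_c_strict_mono homeo_c_surj
      commutes[OF \<open>b \<in> H\<close>] by simp
  then show False
    by (simp add: b_def bump_def)
qed

end
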